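(* For every $J\subseteq[n]$, the hyperplane arrangement $\mathcal B_J$ is free.
   Context: A hyperplane arrangement in $\mathbb C^n$ is a finite set of linear hyperplanes; $H_\alpha$ is the zero set of a nonzero linear form $\alpha$. $\operatorname{Der}(\mathbb C[\mathbf x_n])=\bigoplus_{i=1}^n\mathbb C[\mathbf x_n]\partial_i$ is the module of derivations of $\mathbb C[x_1,\dots,x_n]$, and for an arrangement $\mathcal A$, $\operatorname{Der}(\mathcal A)=\{\delta\in\operatorname{Der}(\mathbb C[\mathbf x_n]):\alpha\mid\delta(\alpha)\text{ for all }H_\alpha\in\mathcal A\}$. $\mathcal A$ is free if $\operatorname{Der}(\mathcal A)$ is a free $\mathbb C[\mathbf x_n]$-module. For $J\subseteq[n]$, $\mathcal B_J$ is the arrangement consisting of $H_{x_j}$ for $j\in[n]\setminus J$ together with $H_{x_j-x_i}$ and $H_{x_j+x_i}$ for all $j\in[n]\setminus J$ and $j<i\le n$. *)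

theory Defs
  imports Complex_Main "HOL-Library.Poly_Mapping"
begin

type_synonym mpoly = "(nat \<Rightarrow>\<^sub>0 nat) \<Rightarrow>\<^sub>0 complex"

definition Const :: "complex \<Rightarrow> mpoly" where
  "Const c = Poly_Mapping.single 0 c"

definition Var :: "nat \<Rightarrow> mpoly" where
  "Var i = Poly_Mapping.single (Poly_Mapping.single i 1) 1"

definition polyring :: "nat \<Rightarrow> mpoly set" where
  "polyring n = {p :: mpoly. \<forall>m \<in> Poly_Mapping.keys p. Poly_Mapping.keys m \<subseteq> {1..n}}"

definition linform :: "nat \<Rightarrow> (nat \<Rightarrow> complex) \<Rightarrow> mpoly" where
  "linform n a = (\<Sum>i=1..n. Const (a i) * Var i)"

text \<open>A derivation sum theta_i d_i of C[x_1..x_n] is given by its coefficient tuple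
(theta_1,...,theta_n); coordinates outside 1..n are 0.\<close>
definition derivs :: "nat \<Rightarrow> (nat \<Rightarrow> mpoly) set" where
  "derivs n = {\<theta>. (\<forall>i\<in>{1..n}. \<theta> i \<in> polyring n) \<and> (\<forall>i. i \<notin> {1..n} \<longrightarrow> \<theta> i = 0)}"

definition apply_der :: "nat \<Rightarrow> (nat \<Rightarrow> mpoly) \<Rightarrow> (nat \<Rightarrow> complex) \<Rightarrow> mpoly" where
  "apply_der n \<theta> a = (\<Sum>i=1..n. Const (a i) * \<theta> i)"

text \<open>Der(A) for an arrangement A given as a set of defining linear forms
(coefficient vectors); divisibility is taken in C[x_1..x_n].\<close>
definition Der :: "nat \<Rightarrow> (nat \<Rightarrow> complex) set \<Rightarrow> (nat \<Rightarrow> mpoly) set" where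
  "Der n A = {\<theta> \<in> derivs n. \<forall>a\<in>A. \<exists>g\<in>polyring n. apply_der n \<theta> a = linform n a * g}"

definition free_submodule :: "nat \<Rightarrow> (nat \<Rightarrow> mpoly) set \<Rightarrow> bool" where
  "free_submodule n M \<longleftrightarrow>
     (\<exists>B \<subseteq> M.
        (\<forall>\<theta>\<in>M. \<exists>F c. finite F \<and> F \<subseteq> B \<and> (\<forall>b\<in>F. c b \<in> polyring n) \<and>
                     \<theta> = (\<lambda>i. \<Sum>b\<in>F. c b * b i)) \<and>
        (\<forall>F c. finite F \<longrightarrow> F \<subseteq> B \<longrightarrow> (\<forall>b\<in>F. c b \<in> polyring n) \<longrightarrow>
               (\<lambda>i. \<Sum>b\<in>F. c b * b i) = (\<lambda>i. 0) \<longrightarrow> (\<forall>b\<in>F. c b = 0)))"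

definition B_arr :: "nat \<Rightarrow> nat set \<Rightarrow> (nat \<Rightarrow> complex) set" where
  "B_arr n J =
     {(\<lambda>k. if k = j then 1 else 0) | j. j \<in> {1..n} - J}
   \<union> {(\<lambda>k. if k = j then 1 else if k = i then -1 else 0) | j i. j \<in> {1..n} - J \<and> j < i \<and> i \<le> n}
   \<union> {(\<lambda>k. if k = j then 1 else if k = i then 1 else 0) | j i. j \<in> {1..n} - J \<and> j < i \<and> i \<le> n}"

end

theory Submission
  imports Defs
begin

text \<open>For \<open>k = 1..n\<close> let \<open>S\<^sub>k = {j < k. j \<notin> J}\<close>, \<open>e\<^sub>k = [k \<notin> J]\<close> and
  \<open>P\<^sub>k(t) = t^e\<^sub>k \<cdot> \<Prod>(t - x\<^sub>j)(t + x\<^sub>j)\<close> over \<open>j \<in> S\<^sub>k\<close>. The derivation \<open>\<phi>\<^sub>k\<close> with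
  coordinates \<open>P\<^sub>k(x\<^sub>i)\<close> for \<open>k \<le> i \<le> n\<close> (only \<open>i = k\<close> when \<open>k \<in> J\<close>) and \<open>0\<close> otherwise lies
  in \<open>Der(B\<^sub>J)\<close>: \<open>x\<^sub>j - x\<^sub>i\<close> divides \<open>P\<^sub>k(x\<^sub>j) - P\<^sub>k(x\<^sub>i)\<close>; \<open>P\<^sub>k\<close> is odd whenever it occupies
  two coordinates, so \<open>x\<^sub>j + x\<^sub>i\<close> divides \<open>P\<^sub>k(x\<^sub>j) + P\<^sub>k(x\<^sub>i)\<close>; and for \<open>j < k \<le> i\<close> both
  forms \<open>x\<^sub>i \<plusminus> x\<^sub>j\<close> divide \<open>P\<^sub>k(x\<^sub>i)\<close> because \<open>j \<in> S\<^sub>k\<close>.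
  The \<open>\<phi>\<^sub>k\<close> are triangular with diagonal entries \<open>P\<^sub>k(x\<^sub>k) \<noteq> 0\<close>, hence independent.
  Conversely, if \<open>\<theta> \<in> Der(B\<^sub>J)\<close> vanishes in the coordinates below \<open>k\<close>, then \<open>\<theta>\<^sub>k\<close> is
  divisible by the pairwise coprime forms \<open>x\<^sub>k \<plusminus> x\<^sub>j\<close> (\<open>j \<in> S\<^sub>k\<close>) and, if \<open>k \<notin> J\<close>, by
  \<open>x\<^sub>k\<close>, hence by \<open>P\<^sub>k(x\<^sub>k)\<close>; subtracting a multiple of \<open>\<phi>\<^sub>k\<close> and proceeding to \<open>k + 1\<close>
  shows that the \<open>\<phi>\<^sub>k\<close> span \<open>Der(B\<^sub>J)\<close>.\<close>

section \<open>Substitution into polynomials\<close>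

lemma Const_0 [simp]: "Const 0 = 0"
  by (simp add: Const_def)

lemma Const_1 [simp]: "Const 1 = 1"
  by (simp add: Const_def)

lemma Const_add: "Const (a + b) = Const a + Const b"
  by (simp add: Const_def single_add)

lemma Const_mult: "Const (a * b) = Const a * Const b"
  by (simp add: Const_def mult_single)

lemma Const_uminus: "Const (- a) = - Const a"
  by (simp add: Const_def single_uminus)

lemma dvd_diff_mult:
  fixes d :: "'a::comm_ring_1"
  assumes "d dvd a - b" "d dvd c - e"
  shows "d dvd a * c - b * e"
proof -
  have "a * c - b * e = a * (c - e) + (a - b) * e"
    by (simp add: algebra_simps)
  then show ?thesis
    using assms by (simp add: dvd_add dvd_mult dvd_mult2)
qed

lemma dvd_diff_power:
  fixes d :: "'a::comm_ring_1"
  assumes "d dvd a - b"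
  shows "d dvd a ^ e - b ^ e"
  by (induction e) (auto intro: dvd_diff_mult assms)

lemma dvd_diff_prod:
  fixes d :: "'a::comm_ring_1"
  assumes "\<And>x. x \<in> A \<Longrightarrow> d dvd f x - g x"
  shows "d dvd prod f A - prod g A"
  using assms by (induction A rule: infinite_finite_induct) (auto intro: dvd_diff_mult)

definition monom_subst :: "(nat \<Rightarrow> mpoly) \<Rightarrow> (nat \<Rightarrow>\<^sub>0 nat) \<Rightarrow> mpoly" where
  "monom_subst s m = (\<Prod>i\<in>Poly_Mapping.keys m. s i ^ Poly_Mapping.lookup m i)"

definition poly_subst :: "(nat \<Rightarrow> mpoly) \<Rightarrow> mpoly \<Rightarrow> mpoly" where
  "poly_subst s p = (\<Sum>m\<in>Poly_Mapping.keys p. Const (Poly_Mapping.lookup p m) * monom_subst s m)"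

lemma monom_subst_superset:
  assumes "finite K" "Poly_Mapping.keys m \<subseteq> K"
  shows "monom_subst s m = (\<Prod>i\<in>K. s i ^ Poly_Mapping.lookup m i)"
  unfolding monom_subst_def
  by (rule prod.mono_neutral_left) (use assms in \<open>auto simp: in_keys_iff\<close>)

lemma monom_subst_0 [simp]: "monom_subst s 0 = 1"
  by (simp add: monom_subst_def)

lemma monom_subst_add: "monom_subst s (a + b) = monom_subst s a * monom_subst s b"
proof -
  let ?K = "Poly_Mapping.keys a \<union> Poly_Mapping.keys b"
  have "monom_subst s (a + b) = (\<Prod>i\<in>?K. s i ^ Poly_Mapping.lookup a i * s i ^ Poly_Mapping.lookup b i)"
    by (subst monom_subst_superset[of ?K]) (auto simp: keys_add lookup_add power_add)
  also have "\<dots> = monom_subst s a * monom_subst s b"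
    by (simp add: prod.distrib monom_subst_superset[of ?K])
  finally show ?thesis .
qed

lemma poly_subst_0 [simp]: "poly_subst s 0 = 0"
  by (simp add: poly_subst_def)

lemma poly_subst_add: "poly_subst s (p + q) = poly_subst s p + poly_subst s q"
  unfolding poly_subst_def
  by (rule setsum_keys_plus_distrib) (simp_all add: Const_add distrib_right)

lemma poly_subst_sum: "poly_subst s (sum f A) = (\<Sum>x\<in>A. poly_subst s (f x))"
  by (induction A rule: infinite_finite_induct) (auto simp: poly_subst_add)

lemma poly_subst_single: "poly_subst s (Poly_Mapping.single m c) = Const c * monom_subst s m"
  by (cases "c = 0") (simp_all add: poly_subst_def)

lemma sum_single_lookup: "(\<Sum>m\<in>Poly_Mapping.keys p. Poly_Mapping.single m (Poly_Mapping.lookup p m)) = p"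
  by (rule poly_mapping_eqI) (auto simp: lookup_sum lookup_single when_def in_keys_iff sum.delta)

lemma poly_subst_mult: "poly_subst s (p * q) = poly_subst s p * poly_subst s q"
proof -
  let ?A = "Poly_Mapping.keys p" and ?B = "Poly_Mapping.keys q"
  have "p * q = (\<Sum>a\<in>?A. \<Sum>b\<in>?B.
      Poly_Mapping.single (a + b) (Poly_Mapping.lookup p a * Poly_Mapping.lookup q b))"
    by (subst (1 2) sum_single_lookup[symmetric]) (simp add: sum_product mult_single)
  then have "poly_subst s (p * q) = (\<Sum>a\<in>?A. \<Sum>b\<in>?B.
      Const (Poly_Mapping.lookup p a) * monom_subst s a * (Const (Poly_Mapping.lookup q b) * monom_subst s b))"
    by (simp add: poly_subst_sum poly_subst_single monom_subst_add Const_mult mult_ac)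
  also have "\<dots> = poly_subst s p * poly_subst s q"
    by (simp add: poly_subst_def sum_product)
  finally show ?thesis .
qed

lemma poly_subst_Const [simp]: "poly_subst s (Const c) = Const c"
  by (simp add: Const_def poly_subst_single)

lemma poly_subst_1 [simp]: "poly_subst s 1 = 1"
  using poly_subst_Const[of s 1] by simp

lemma poly_subst_Var [simp]: "poly_subst s (Var i) = s i"
  by (simp add: Var_def poly_subst_single monom_subst_def)

lemma poly_subst_uminus: "poly_subst s (- p) = - poly_subst s p"
  using poly_subst_add[of s "- p" p] by (simp add: eq_neg_iff_add_eq_0)

lemma poly_subst_diff: "poly_subst s (p - q) = poly_subst s p - poly_subst s q"
  using poly_subst_add[of s p "- q"] by (simp add: poly_subst_uminus)

lemma poly_subst_prod: "poly_subst s (prod f A) = (\<Prod>x\<in>A. poly_subst s (f x))"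
  by (induction A rule: infinite_finite_induct) (auto simp: poly_subst_mult)

lemma poly_subst_power: "poly_subst s (p ^ e) = poly_subst s p ^ e"
  by (induction e) (auto simp: poly_subst_mult)

lemmas poly_subst_simps =
  poly_subst_add poly_subst_diff poly_subst_uminus poly_subst_mult poly_subst_prod poly_subst_power

lemma Var_power: "Var i ^ e = Poly_Mapping.single (Poly_Mapping.single i e) 1"
proof (induction e)
  case (Suc e)
  have "Poly_Mapping.single i (Suc e) = Poly_Mapping.single i 1 + Poly_Mapping.single i e"
    by (simp add: single_add[symmetric])
  with Suc show ?case
    by (simp add: Var_def mult_single)
qed simp

lemma monom_subst_Var: "monom_subst Var m = Poly_Mapping.single m 1"
proof -
  have "(\<Prod>i\<in>K. Poly_Mapping.single (g i) (1::complex)) = Poly_Mapping.single (sum g K) 1"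
    for K and g :: "nat \<Rightarrow> nat \<Rightarrow>\<^sub>0 nat"
    by (induction K rule: infinite_finite_induct) (auto simp: mult_single)
  then show ?thesis
    by (simp add: monom_subst_def Var_power sum_single_lookup)
qed

lemma poly_subst_Var_self [simp]: "poly_subst Var p = p"
  by (simp add: poly_subst_def monom_subst_Var Const_def mult_single sum_single_lookup)

lemma poly_subst_dvd_diff:
  assumes "\<And>i. d dvd s i - t i"
  shows "d dvd poly_subst s p - poly_subst t p"
proof -
  have "poly_subst s p - poly_subst t p =
      (\<Sum>m\<in>Poly_Mapping.keys p. Const (Poly_Mapping.lookup p m) * (monom_subst s m - monom_subst t m))"
    by (simp add: poly_subst_def sum_subtractf algebra_simps)
  also have "d dvd \<dots>"
    by (intro dvd_sum dvd_mult)
      (auto simp: monom_subst_def intro!: dvd_diff_prod dvd_diff_power assms)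
  finally show ?thesis .
qed

text \<open>The factor theorem in \<open>x\<^sub>k\<close>; the hypothesis says that \<open>c\<close> does not involve \<open>x\<^sub>k\<close>.\<close>
lemma Var_minus_dvd_iff_subst:
  assumes "poly_subst (Var(k := c)) c = c"
  shows "(Var k - c) dvd f \<longleftrightarrow> poly_subst (Var(k := c)) f = 0"
proof
  assume "(Var k - c) dvd f"
  then obtain g where "f = (Var k - c) * g" ..
  then show "poly_subst (Var(k := c)) f = 0"
    using assms by (simp add: poly_subst_simps)
next
  have "(Var k - c) dvd poly_subst Var f - poly_subst (Var(k := c)) f"
    by (rule poly_subst_dvd_diff) simp
  then show "poly_subst (Var(k := c)) f = 0 \<Longrightarrow> (Var k - c) dvd f"
    by simp
qed

lemma Var_minus_dvd_mult_cancel: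
  assumes "(Var k - c) dvd p * g"
    and "poly_subst (Var(k := c)) c = c" "poly_subst (Var(k := c)) p \<noteq> 0"
  shows "(Var k - c) dvd g"
  using assms by (simp add: Var_minus_dvd_iff_subst poly_subst_mult)

section \<open>The polynomial ring \<open>\<complex>[x\<^sub>1, ..., x\<^sub>n]\<close>\<close>

lemma polyring_0 [simp]: "0 \<in> polyring n"
  by (simp add: polyring_def)

lemma polyring_add [simp]: "p \<in> polyring n \<Longrightarrow> q \<in> polyring n \<Longrightarrow> p + q \<in> polyring n"
  unfolding polyring_def using keys_add[of p q] by blast

lemma polyring_uminus [simp]: "p \<in> polyring n \<Longrightarrow> - p \<in> polyring n"
  by (simp add: polyring_def)

lemma polyring_diff [simp]: "p \<in> polyring n \<Longrightarrow> q \<in> polyring n \<Longrightarrow> p - q \<in> polyring n"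
  using polyring_add[of p n "- q"] by simp

lemma polyring_mult [simp]:
  assumes "p \<in> polyring n" "q \<in> polyring n"
  shows "p * q \<in> polyring n"
  unfolding polyring_def
proof (intro CollectI ballI)
  fix m
  assume "m \<in> Poly_Mapping.keys (p * q)"
  then obtain a b where "m = a + b" and ab: "a \<in> Poly_Mapping.keys p" "b \<in> Poly_Mapping.keys q"
    using keys_mult[of p q] by blast
  moreover have "Poly_Mapping.keys a \<subseteq> {1..n}" "Poly_Mapping.keys b \<subseteq> {1..n}"
    using assms ab by (simp_all add: polyring_def)
  ultimately show "Poly_Mapping.keys m \<subseteq> {1..n}"
    using keys_add[of a b] by auto
qed

lemma polyring_Const [simp]: "Const c \<in> polyring n"
  by (simp add: polyring_def Const_def)

lemma polyring_1 [simp]: "1 \<in> polyring n"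
  using polyring_Const[of 1 n] by simp

lemma polyring_Var [simp]: "i \<in> {1..n} \<Longrightarrow> Var i \<in> polyring n"
  by (simp add: polyring_def Var_def)

lemma polyring_sum: "(\<And>x. x \<in> A \<Longrightarrow> f x \<in> polyring n) \<Longrightarrow> sum f A \<in> polyring n"
  by (induction A rule: infinite_finite_induct) auto

lemma polyring_prod: "(\<And>x. x \<in> A \<Longrightarrow> f x \<in> polyring n) \<Longrightarrow> prod f A \<in> polyring n"
  by (induction A rule: infinite_finite_induct) auto

lemma polyring_power [simp]: "p \<in> polyring n \<Longrightarrow> p ^ e \<in> polyring n"
  by (induction e) auto

lemma poly_subst_in_polyring: "(\<And>i. s i \<in> polyring n) \<Longrightarrow> poly_subst s p \<in> polyring n"
  unfolding poly_subst_def monom_subst_def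
  by (intro polyring_sum polyring_mult polyring_Const polyring_prod polyring_power) auto

lemma poly_subst_polyring_cong:
  assumes "p \<in> polyring n" "\<And>i. i \<in> {1..n} \<Longrightarrow> s i = t i"
  shows "poly_subst s p = poly_subst t p"
  unfolding poly_subst_def monom_subst_def
proof (intro sum.cong refl arg_cong2[where f = "(*)"] prod.cong)
  fix m i
  assume "m \<in> Poly_Mapping.keys p" "i \<in> Poly_Mapping.keys m"
  then have "i \<in> {1..n}"
    using assms(1) unfolding polyring_def by blast
  then show "s i ^ Poly_Mapping.lookup m i = t i ^ Poly_Mapping.lookup m i"
    using assms(2) by simp
qed

text \<open>Setting the variables outside \<open>1..n\<close> to zero fixes \<open>f\<close> and \<open>l\<close>, hence also the
  quotient \<open>g\<close>, which therefore lies in \<open>polyring n\<close>.\<close>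
lemma polyring_dvdE:
  assumes "f \<in> polyring n" "l \<in> polyring n" "l \<noteq> 0" "l dvd f"
  obtains g where "g \<in> polyring n" "f = l * g"
proof -
  obtain g where fg: "f = l * g"
    using assms(4) ..
  define r where "r i = (if i \<in> {1..n} then Var i else 0)" for i
  have "poly_subst r f = f" "poly_subst r l = l"
    using poly_subst_polyring_cong[OF assms(1), of r Var] poly_subst_polyring_cong[OF assms(2), of r Var]
    by (auto simp: r_def)
  then have "l * g = l * poly_subst r g"
    using fg by (metis poly_subst_mult)
  then have "g = poly_subst r g"
    using assms(3) by simp
  moreover have "poly_subst r g \<in> polyring n"
    by (rule poly_subst_in_polyring) (simp add: r_def)
  ultimately show ?thesis
    using that fg by simp
qed

lemma lookup_Var_single:
  "Poly_Mapping.lookup (Var i) (Poly_Mapping.single k 1) = (if i = k then 1 else 0)"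
proof -
  have "Poly_Mapping.single i (1::nat) = Poly_Mapping.single k 1 \<longleftrightarrow> i = k"
    by (metis lookup_single_eq lookup_single_not_eq one_neq_zero)
  then show ?thesis
    by (simp add: Var_def lookup_single when_def)
qed

lemma Var_neq_0 [simp]: "Var k \<noteq> 0"
proof
  assume "Var k = 0"
  then show False
    using lookup_Var_single[of k k] by simp
qed

lemma Var_eq_iff [simp]: "Var k = Var j \<longleftrightarrow> k = j"
proof
  assume "Var k = Var j"
  then have "Poly_Mapping.lookup (Var j) (Poly_Mapping.single k 1) = 1"
    using lookup_Var_single[of k k] by simp
  then show "k = j"
    using lookup_Var_single[of j k] by (simp split: if_splits)
qed simp

lemma Var_add_neq_0: "Var k + Var j \<noteq> 0"
proof
  assume "Var k + Var j = 0"
  then have "Poly_Mapping.lookup (Var k + Var j) (Poly_Mapping.single k 1) = 0"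
    by simp
  then show False
    by (simp only: lookup_add lookup_Var_single) (simp split: if_splits)
qed

section \<open>Products of the forms \<open>t \<plusminus> x\<^sub>j\<close>\<close>

definition typeB_poly :: "nat set \<Rightarrow> nat \<Rightarrow> mpoly \<Rightarrow> mpoly" where
  "typeB_poly S e t = t ^ e * (\<Prod>j\<in>S. (t - Var j) * (t + Var j))"

lemma typeB_poly_insert:
  "finite S \<Longrightarrow> j \<notin> S \<Longrightarrow>
    typeB_poly (insert j S) e t = typeB_poly S e t * ((t - Var j) * (t + Var j))"
  by (simp add: typeB_poly_def mult_ac)

lemma poly_subst_typeB_poly:
  assumes "\<And>j. j \<in> S \<Longrightarrow> s j = Var j"
  shows "poly_subst s (typeB_poly S e t) = typeB_poly S e (poly_subst s t)"
  unfolding typeB_poly_def using assms by (simp add: poly_subst_simps)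

lemma typeB_poly_in_polyring:
  "t \<in> polyring n \<Longrightarrow> S \<subseteq> {1..n} \<Longrightarrow> typeB_poly S e t \<in> polyring n"
  unfolding typeB_poly_def
  by (intro polyring_mult polyring_power polyring_prod polyring_diff polyring_add polyring_Var) auto

lemma typeB_poly_neq_0:
  assumes "k \<notin> S" "t = Var k \<or> t = - Var k"
  shows "typeB_poly S e t \<noteq> 0"
proof -
  have "(t - Var j) * (t + Var j) \<noteq> 0" if "j \<in> S" for j
  proof -
    have "j \<noteq> k"
      using that assms(1) by auto
    then have "Var k - Var j \<noteq> 0" "Var k + Var j \<noteq> 0"
      by (simp_all add: Var_add_neq_0)
    moreover have "(- Var k - Var j) * (- Var k + Var j) = (Var k + Var j) * (Var k - Var j)"
      by (simp add: algebra_simps)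
    ultimately show ?thesis
      using assms(2) by auto
  qed
  moreover have "t \<noteq> 0"
    using assms(2) by auto
  ultimately show ?thesis
    unfolding typeB_poly_def by (cases "finite S") (simp_all add: prod_zero_iff)
qed

lemma typeB_poly_dvd_diff: "d dvd a - b \<Longrightarrow> d dvd typeB_poly S e a - typeB_poly S e b"
  unfolding typeB_poly_def
  by (intro dvd_diff_mult dvd_diff_power dvd_diff_prod) (auto simp: algebra_simps)

lemma typeB_poly_odd: "typeB_poly S 1 (- t) = - typeB_poly S 1 t"
proof -
  have "(\<Prod>j\<in>S. (- t - Var j) * (- t + Var j)) = (\<Prod>j\<in>S. (t - Var j) * (t + Var j))"
    by (rule prod.cong) (auto simp: algebra_simps)
  then show ?thesis
    by (simp add: typeB_poly_def)
qed

lemma typeB_poly_root_dvd: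
  assumes "finite S" "j \<in> S"
  shows "(t - Var j) dvd typeB_poly S e t" "(t + Var j) dvd typeB_poly S e t"
proof -
  have "(t - Var j) * (t + Var j) dvd typeB_poly S e t"
    unfolding typeB_poly_def using assms by (intro dvd_mult dvd_prodI)
  then show "(t - Var j) dvd typeB_poly S e t" "(t + Var j) dvd typeB_poly S e t"
    using dvd_mult_left dvd_mult_right by blast+
qed

text \<open>The linear forms \<open>x\<^sub>k \<plusminus> x\<^sub>j\<close> (and \<open>x\<^sub>k\<close>) are pairwise coprime, so their product divides
  every common multiple; each factor is split off by substituting its root for \<open>x\<^sub>k\<close>.\<close>
lemma typeB_poly_dvd:
  assumes "finite S" "k \<notin> S" "e \<le> 1"
    and "\<And>j. j \<in> S \<Longrightarrow> (Var k - Var j) dvd f" "\<And>j. j \<in> S \<Longrightarrow> (Var k + Var j) dvd f"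
    and "e = 1 \<Longrightarrow> Var k dvd f"
  shows "typeB_poly S e (Var k) dvd f"
  using assms(1,2,4,5)
proof (induction S rule: finite_induct)
  case empty
  then show ?case
    using assms(3,6) by (cases e) (simp_all add: typeB_poly_def)
next
  case (insert j S)
  let ?P = "typeB_poly S e"
  have "j \<noteq> k" "k \<notin> S"
    using insert.prems(1) by auto
  obtain g where f: "f = ?P (Var k) * g"
    using insert by blast
  have "(Var k - Var j) dvd g"
  proof (rule Var_minus_dvd_mult_cancel)
    show "(Var k - Var j) dvd ?P (Var k) * g"
      using insert.prems(2) f by blast
    show "poly_subst (Var(k := Var j)) (Var j) = Var j"
      using \<open>j \<noteq> k\<close> by simp
    have "poly_subst (Var(k := Var j)) (?P (Var k)) = ?P (Var j)"
      using \<open>k \<notin> S\<close> by (subst poly_subst_typeB_poly) auto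
    then show "poly_subst (Var(k := Var j)) (?P (Var k)) \<noteq> 0"
      using insert.hyps(2) typeB_poly_neq_0 by simp
  qed
  then obtain h where g: "g = (Var k - Var j) * h" ..
  have "(Var k - - Var j) dvd h"
  proof (rule Var_minus_dvd_mult_cancel)
    show "(Var k - - Var j) dvd (?P (Var k) * (Var k - Var j)) * h"
      using insert.prems(3) f g by (simp add: mult.assoc)
    show "poly_subst (Var(k := - Var j)) (- Var j) = - Var j"
      using \<open>j \<noteq> k\<close> by (simp add: poly_subst_uminus)
    have "poly_subst (Var(k := - Var j)) (?P (Var k) * (Var k - Var j)) =
        ?P (- Var j) * - (Var j + Var j)"
      using \<open>k \<notin> S\<close> \<open>j \<noteq> k\<close>
      by (subst poly_subst_mult, subst poly_subst_typeB_poly) (auto simp: poly_subst_diff)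
    then show "poly_subst (Var(k := - Var j)) (?P (Var k) * (Var k - Var j)) \<noteq> 0"
      using insert.hyps(2) typeB_poly_neq_0[of j S "- Var j"] Var_add_neq_0[of j j] by simp
  qed
  then show ?case
    using f g typeB_poly_insert[OF insert.hyps] by (auto simp: mult_ac)
qed

section \<open>Logarithmic derivations\<close>

lemma linform_in_polyring: "linform n a \<in> polyring n"
  unfolding linform_def by (intro polyring_sum) simp

lemma apply_der_in_polyring: "\<theta> \<in> derivs n \<Longrightarrow> apply_der n \<theta> a \<in> polyring n"
  unfolding apply_der_def derivs_def by (intro polyring_sum) simp

lemma Der_iff_dvd:
  assumes "\<And>a. a \<in> A \<Longrightarrow> linform n a \<noteq> 0"
  shows "\<theta> \<in> Der n A \<longleftrightarrow> \<theta> \<in> derivs n \<and> (\<forall>a\<in>A. linform n a dvd apply_der n \<theta> a)"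
proof -
  have "(\<exists>g\<in>polyring n. apply_der n \<theta> a = linform n a * g) \<longleftrightarrow> linform n a dvd apply_der n \<theta> a"
    if "\<theta> \<in> derivs n" "a \<in> A" for a
    using that assms[of a] linform_in_polyring apply_der_in_polyring
    by (metis dvd_triv_left polyring_dvdE)
  then show ?thesis
    by (auto simp: Der_def)
qed

lemma apply_der_diff_mult:
  "apply_der n (\<lambda>i. \<theta> i - q * \<psi> i) a = apply_der n \<theta> a - q * apply_der n \<psi> a"
  unfolding apply_der_def
  by (simp add: right_diff_distrib mult.left_commute sum_subtractf sum_distrib_left)

lemma Der_diff_mult:
  assumes "\<theta> \<in> Der n A" "\<psi> \<in> Der n A" "q \<in> polyring n"
  shows "(\<lambda>i. \<theta> i - q * \<psi> i) \<in> Der n A"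
proof -
  have "(\<lambda>i. \<theta> i - q * \<psi> i) \<in> derivs n"
    using assms unfolding Der_def derivs_def by simp
  moreover have "\<exists>g\<in>polyring n. apply_der n (\<lambda>i. \<theta> i - q * \<psi> i) a = linform n a * g"
    if "a \<in> A" for a
  proof -
    obtain g h where "g \<in> polyring n" "apply_der n \<theta> a = linform n a * g"
      and "h \<in> polyring n" "apply_der n \<psi> a = linform n a * h"
      using assms(1,2) \<open>a \<in> A\<close> unfolding Der_def by blast
    then show ?thesis
      using assms(3) unfolding apply_der_diff_mult
      by (intro bexI[of _ "g - q * h"]) (simp_all add: right_diff_distrib mult.left_commute)
  qed
  ultimately show ?thesis
    by (simp add: Der_def)
qed

lemma
  assumes "j \<in> {1..n}"
  shows linform_unit: "linform n (\<lambda>k. if k = j then 1 else 0) = Var j"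
    and apply_der_unit: "apply_der n \<theta> (\<lambda>k. if k = j then 1 else 0) = \<theta> j"
  using assms by (simp_all add: linform_def apply_der_def if_distrib[of "\<lambda>c. Const c * _"] cong: if_cong)

lemma
  assumes "j \<in> {1..n}" "i \<in> {1..n}" "j \<noteq> i"
  shows linform_pair:
      "linform n (\<lambda>k. if k = j then 1 else if k = i then c else 0) = Var j + Const c * Var i"
    and apply_der_pair:
      "apply_der n \<theta> (\<lambda>k. if k = j then 1 else if k = i then c else 0) = \<theta> j + Const c * \<theta> i"
proof -
  have "(if k = j then 1 else if k = i then c else 0) =
      (if k = j then 1 else 0) + (if k = i then c else 0)" for k
    using assms(3) by simp
  then show "linform n (\<lambda>k. if k = j then 1 else if k = i then c else 0) = Var j + Const c * Var i"
    "apply_der n \<theta> (\<lambda>k. if k = j then 1 else if k = i then c else 0) = \<theta> j + Const c * \<theta> i"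
    using assms
    by (simp_all add: linform_def apply_der_def Const_add distrib_right sum.distrib
        if_distrib[of "\<lambda>c. Const c * _"] cong: if_cong)
qed

lemma Ball_B_arr:
  "(\<forall>a\<in>B_arr n J. P a) \<longleftrightarrow>
    (\<forall>j\<in>{1..n} - J. P (\<lambda>k. if k = j then 1 else 0) \<and>
      (\<forall>i\<in>{j<..n}. P (\<lambda>k. if k = j then 1 else if k = i then -1 else 0) \<and>
        P (\<lambda>k. if k = j then 1 else if k = i then 1 else 0)))"
  (is "?lhs \<longleftrightarrow> ?rhs")
proof
  assume ?lhs
  moreover have "(\<lambda>k. if k = j then 1 else 0) \<in> B_arr n J" if "j \<in> {1..n} - J" for j
    using that unfolding B_arr_def by blast
  moreover have "(\<lambda>k. if k = j then 1 else if k = i then -1 else 0) \<in> B_arr n J"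
    and "(\<lambda>k. if k = j then 1 else if k = i then 1 else 0) \<in> B_arr n J"
    if "j \<in> {1..n} - J" "i \<in> {j<..n}" for i j
    using that unfolding B_arr_def greaterThanAtMost_iff by blast+
  ultimately show ?rhs
    by blast
next
  assume ?rhs
  then show ?lhs
    unfolding B_arr_def by auto
qed

lemma Der_B_arr_iff:
  "\<theta> \<in> Der n (B_arr n J) \<longleftrightarrow> \<theta> \<in> derivs n \<and>
    (\<forall>j\<in>{1..n} - J. Var j dvd \<theta> j \<and>
      (\<forall>i\<in>{j<..n}. (Var j - Var i) dvd \<theta> j - \<theta> i \<and> (Var j + Var i) dvd \<theta> j + \<theta> i))"
  (is "_ \<longleftrightarrow> ?rhs")
proof -
  note forms = linform_unit apply_der_unit linform_pair apply_der_pair Const_uminus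
  have "\<theta> \<in> Der n (B_arr n J) \<longleftrightarrow>
      \<theta> \<in> derivs n \<and> (\<forall>a\<in>B_arr n J. linform n a dvd apply_der n \<theta> a)"
    by (rule Der_iff_dvd) (auto simp: B_arr_def forms Var_add_neq_0)
  also have "\<dots> \<longleftrightarrow> ?rhs"
    by (simp add: Ball_B_arr forms)
  finally show ?thesis .
qed

section \<open>Triangular bases\<close>

locale triangular_basis =
  fixes n :: nat and M :: "(nat \<Rightarrow> mpoly) set" and \<phi> :: "nat \<Rightarrow> nat \<Rightarrow> mpoly"
  assumes subset_derivs: "M \<subseteq> derivs n"
    and diff_mult_closed: "\<And>\<theta> \<psi> q. \<theta> \<in> M \<Longrightarrow> \<psi> \<in> M \<Longrightarrow> q \<in> polyring n \<Longrightarrow> (\<lambda>i. \<theta> i - q * \<psi> i) \<in> M"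
    and basis_in: "\<And>k. k \<in> {1..n} \<Longrightarrow> \<phi> k \<in> M"
    and basis_below: "\<And>k j. k \<in> {1..n} \<Longrightarrow> j < k \<Longrightarrow> \<phi> k j = 0"
    and basis_diag_neq_0: "\<And>k. k \<in> {1..n} \<Longrightarrow> \<phi> k k \<noteq> 0"
    and basis_diag_dvd: "\<And>\<theta> k. \<theta> \<in> M \<Longrightarrow> k \<in> {1..n} \<Longrightarrow> (\<And>j. j < k \<Longrightarrow> \<theta> j = 0) \<Longrightarrow> \<phi> k k dvd \<theta> k"
begin

lemma inj_on_basis: "inj_on \<phi> {1..n}"
proof (rule inj_onI, rule ccontr)
  have neq: "\<phi> a \<noteq> \<phi> b" if "a \<in> {1..n}" "b \<in> {1..n}" "a < b" for a b
  proof
    assume "\<phi> a = \<phi> b"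
    then have "\<phi> a a = \<phi> b a"
      by simp
    then show False
      using that basis_below[of b a] basis_diag_neq_0[of a] by simp
  qed
  fix a b
  assume "a \<in> {1..n}" "b \<in> {1..n}" "\<phi> a = \<phi> b" "a \<noteq> b"
  then show False
    using neq[of a b] neq[of b a] by (cases "a < b") auto
qed

lemma span_from:
  assumes "k \<le> n + 1" "1 \<le> k" "\<theta> \<in> M" "\<And>j. j < k \<Longrightarrow> \<theta> j = 0"
  shows "\<exists>c. (\<forall>m. c m \<in> polyring n) \<and> \<theta> = (\<lambda>i. \<Sum>m\<in>{k..n}. c m * \<phi> m i)"
  using assms
proof (induction k arbitrary: \<theta> rule: inc_induct)
  case base
  have "\<theta> = (\<lambda>i. 0)"
  proof
    fix i
    show "\<theta> i = 0"
      using base.prems subset_derivs by (cases "i \<le> n") (auto simp: derivs_def)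
  qed
  then show ?case
    by (intro exI[of _ "\<lambda>_. 0"]) simp
next
  case (step k)
  then have k: "k \<in> {1..n}"
    by simp
  have "\<theta> k \<in> polyring n" "\<phi> k k \<in> polyring n"
    using k step.prems(2) basis_in[OF k] subset_derivs by (auto simp: derivs_def)
  then obtain q where q: "q \<in> polyring n" "\<theta> k = \<phi> k k * q"
    using basis_diag_dvd[OF step.prems(2) k step.prems(3)] basis_diag_neq_0[OF k]
    by (blast elim: polyring_dvdE)
  define \<theta>' where "\<theta>' i = \<theta> i - q * \<phi> k i" for i
  have "\<theta>' \<in> M"
    unfolding \<theta>'_def using step.prems(2) basis_in[OF k] q(1) by (rule diff_mult_closed)
  moreover have "\<theta>' j = 0" if "j < Suc k" for j
    using that step.prems(3) basis_below[OF k] q(2)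
    by (cases "j = k") (simp_all add: \<theta>'_def mult.commute)
  ultimately have "\<exists>c. (\<forall>m. c m \<in> polyring n) \<and> \<theta>' = (\<lambda>i. \<Sum>m\<in>{Suc k..n}. c m * \<phi> m i)"
    using step.IH by simp
  then obtain c where c: "\<forall>m. c m \<in> polyring n" "\<theta>' = (\<lambda>i. \<Sum>m\<in>{Suc k..n}. c m * \<phi> m i)"
    by blast
  have "\<theta> = (\<lambda>i. \<Sum>m\<in>{k..n}. (c(k := q)) m * \<phi> m i)"
  proof
    fix i
    have "{k..n} = insert k {Suc k..n}"
      using k by auto
    then have "(\<Sum>m\<in>{k..n}. (c(k := q)) m * \<phi> m i) = q * \<phi> k i + (\<Sum>m\<in>{Suc k..n}. c m * \<phi> m i)"
      by simp
    moreover have "\<theta> i = q * \<phi> k i + \<theta>' i"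
      by (simp add: \<theta>'_def)
    ultimately show "\<theta> i = (\<Sum>m\<in>{k..n}. (c(k := q)) m * \<phi> m i)"
      using c(2) by simp
  qed
  with c(1) q(1) show ?case
    by (intro exI[of _ "c(k := q)"]) simp
qed

lemma span:
  assumes "\<theta> \<in> M"
  shows "\<exists>c. (\<forall>m. c m \<in> polyring n) \<and> \<theta> = (\<lambda>i. \<Sum>m\<in>{1..n}. c m * \<phi> m i)"
proof (rule span_from)
  show "\<theta> j = 0" if "j < 1" for j
    using that assms subset_derivs by (auto simp: derivs_def)
qed (use assms in auto)

lemma independent:
  assumes "finite F" "F \<subseteq> \<phi> ` {1..n}" "(\<lambda>i. \<Sum>b\<in>F. c b * b i) = (\<lambda>i. 0)"
  shows "\<forall>b\<in>F. c b = 0"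
proof -
  have "c (\<phi> k) = 0" if "k \<in> {1..n}" "\<phi> k \<in> F" for k
    using that
  proof (induction k rule: less_induct)
    case (less k)
    have "(\<Sum>b\<in>F - {\<phi> k}. c b * b k) = 0"
    proof (rule sum.neutral, rule ballI)
      fix b
      assume b: "b \<in> F - {\<phi> k}"
      obtain m where m: "m \<in> {1..n}" "b = \<phi> m"
        using b assms(2) by blast
      then have "m < k \<or> k < m"
        using b by (cases m k rule: linorder_cases) auto
      then show "c b * b k = 0"
        using less.IH[of m] m b basis_below[of m k] by auto
    qed
    then have "(\<Sum>b\<in>F. c b * b k) = c (\<phi> k) * \<phi> k k"
      using less.prems assms(1) by (simp add: sum.remove)
    moreover have "(\<Sum>b\<in>F. c b * b k) = 0"
      using assms(3) by (simp add: fun_eq_iff)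
    ultimately show ?case
      using basis_diag_neq_0[OF less.prems(1)] by simp
  qed
  then show ?thesis
    using assms(2) by blast
qed

theorem free: "free_submodule n M"
  unfolding free_submodule_def
proof (rule exI[of _ "\<phi> ` {1..n}"], intro conjI allI impI ballI)
  show "\<phi> ` {1..n} \<subseteq> M"
    using basis_in by blast
next
  fix \<theta>
  assume "\<theta> \<in> M"
  then obtain c where c: "\<forall>m. c m \<in> polyring n" "\<theta> = (\<lambda>i. \<Sum>m\<in>{1..n}. c m * \<phi> m i)"
    using span by blast
  define c' where "c' = c \<circ> inv_into {1..n} \<phi>"
  have "(\<Sum>b\<in>\<phi> ` {1..n}. c' b * b i) = (\<Sum>m\<in>{1..n}. c m * \<phi> m i)" for i
  proof (rule sum.reindex_cong[OF inj_on_basis refl])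
    fix m
    assume "m \<in> {1..n}"
    then show "c' (\<phi> m) * \<phi> m i = c m * \<phi> m i"
      using inv_into_f_f[OF inj_on_basis] by (simp add: c'_def)
  qed
  then have "\<theta> = (\<lambda>i. \<Sum>b\<in>\<phi> ` {1..n}. c' b * b i)"
    using c(2) by simp
  with c(1) show "\<exists>F c. finite F \<and> F \<subseteq> \<phi> ` {1..n} \<and> (\<forall>b\<in>F. c b \<in> polyring n) \<and>
      \<theta> = (\<lambda>i. \<Sum>b\<in>F. c b * b i)"
    by (intro exI[of _ "\<phi> ` {1..n}"] exI[of _ c']) (simp add: c'_def)
qed (use independent in blast)

end

section \<open>A basis of \<open>Der(B\<^sub>J)\<close>\<close>

definition B_basis :: "nat \<Rightarrow> nat set \<Rightarrow> nat \<Rightarrow> nat \<Rightarrow> mpoly" where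
  "B_basis n J k i =
    (if k \<le> i \<and> i \<le> n \<and> (k \<notin> J \<or> i = k)
     then typeB_poly ({1..<k} - J) (of_bool (k \<notin> J)) (Var i) else 0)"

lemma B_basis_below: "j < k \<Longrightarrow> B_basis n J k j = 0"
  by (simp add: B_basis_def)

lemma B_basis_diag: "k \<le> n \<Longrightarrow> B_basis n J k k = typeB_poly ({1..<k} - J) (of_bool (k \<notin> J)) (Var k)"
  by (simp add: B_basis_def)

lemma B_basis_in_derivs: "k \<in> {1..n} \<Longrightarrow> B_basis n J k \<in> derivs n"
  unfolding derivs_def B_basis_def
  by (auto intro!: typeB_poly_in_polyring)

lemma B_basis_unit_dvd:
  assumes "j \<in> {1..n} - J"
  shows "Var j dvd B_basis n J k j"
proof (cases "k \<in> J")
  case True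
  with assms have "B_basis n J k j = 0"
    by (auto simp: B_basis_def)
  then show ?thesis
    by simp
next
  case False
  then show ?thesis
    by (simp add: B_basis_def typeB_poly_def)
qed

lemma B_basis_pair_dvd:
  assumes "j \<in> {1..n} - J" "i \<in> {j<..n}"
  shows "(Var j - Var i) dvd B_basis n J k j - B_basis n J k i"
    and "(Var j + Var i) dvd B_basis n J k j + B_basis n J k i"
proof -
  consider (below) "j < k" | (fixed) "k \<le> j" "k \<in> J" | (moving) "k \<le> j" "k \<notin> J"
    by linarith
  then have "(Var j - Var i) dvd B_basis n J k j - B_basis n J k i \<and>
      (Var j + Var i) dvd B_basis n J k j + B_basis n J k i"
  proof cases
    case below
    then have "j \<in> {1..<k} - J"
      using assms(1) by simp
    then have "(Var i - Var j) dvd B_basis n J k i" "(Var i + Var j) dvd B_basis n J k i"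
      by (simp_all add: B_basis_def typeB_poly_root_dvd)
    then have "(Var j - Var i) dvd B_basis n J k i" "(Var j + Var i) dvd B_basis n J k i"
      by (metis minus_diff_eq minus_dvd_iff, simp add: add.commute)
    then show ?thesis
      using below by (simp add: B_basis_below)
  next
    case fixed
    then show ?thesis
      using assms by (auto simp: B_basis_def)
  next
    case moving
    let ?Q = "typeB_poly ({1..<k} - J) 1"
    have "B_basis n J k j = ?Q (Var j)" "B_basis n J k i = ?Q (Var i)"
      using assms moving by (auto simp: B_basis_def)
    moreover have "(Var j - Var i) dvd ?Q (Var j) - ?Q (Var i)"
      by (rule typeB_poly_dvd_diff) simp
    moreover have "(Var j - - Var i) dvd ?Q (Var j) - ?Q (- Var i)"
      by (rule typeB_poly_dvd_diff) simp
    ultimately show ?thesis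
      using typeB_poly_odd[of _ "Var i"] by simp
  qed
  then show "(Var j - Var i) dvd B_basis n J k j - B_basis n J k i"
    and "(Var j + Var i) dvd B_basis n J k j + B_basis n J k i"
    by blast+
qed

lemma B_basis_in_Der: "k \<in> {1..n} \<Longrightarrow> B_basis n J k \<in> Der n (B_arr n J)"
  by (simp add: Der_B_arr_iff B_basis_in_derivs B_basis_unit_dvd B_basis_pair_dvd)

lemma B_basis_diag_dvd:
  assumes "\<theta> \<in> Der n (B_arr n J)" "k \<in> {1..n}" "\<And>j. j < k \<Longrightarrow> \<theta> j = 0"
  shows "B_basis n J k k dvd \<theta> k"
proof -
  have "typeB_poly ({1..<k} - J) (of_bool (k \<notin> J)) (Var k) dvd \<theta> k"
  proof (rule typeB_poly_dvd)
    fix j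
    assume j: "j \<in> {1..<k} - J"
    then have "(Var j - Var k) dvd \<theta> j - \<theta> k" "(Var j + Var k) dvd \<theta> j + \<theta> k"
      using assms(1,2) by (auto simp: Der_B_arr_iff)
    moreover have "\<theta> j = 0"
      using j assms(3) by simp
    ultimately show "(Var k - Var j) dvd \<theta> k" "(Var k + Var j) dvd \<theta> k"
      by (metis minus_diff_eq minus_dvd_iff diff_0 dvd_minus_iff, simp add: add.commute)
  next
    assume "of_bool (k \<notin> J) = (1::nat)"
    then have "k \<notin> J"
      by (cases "k \<in> J") simp_all
    then show "Var k dvd \<theta> k"
      using assms(1,2) by (simp add: Der_B_arr_iff)
  qed simp_all
  then show ?thesis
    using assms(2) by (simp add: B_basis_diag)
qed

theorem mainTheorem14:
  fixes n :: nat and J :: "nat set"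
  assumes "J \<subseteq> {1..n}"
  shows "free_submodule n (Der n (B_arr n J))"
proof -
  have "triangular_basis n (Der n (B_arr n J)) (B_basis n J)"
  proof
    show "Der n (B_arr n J) \<subseteq> derivs n"
      by (auto simp: Der_def)
    show "(\<lambda>i. \<theta> i - q * \<psi> i) \<in> Der n (B_arr n J)"
      if "\<theta> \<in> Der n (B_arr n J)" "\<psi> \<in> Der n (B_arr n J)" "q \<in> polyring n" for \<theta> \<psi> q
      using that by (rule Der_diff_mult)
    show "B_basis n J k \<in> Der n (B_arr n J)" if "k \<in> {1..n}" for k
      using that by (rule B_basis_in_Der)
    show "B_basis n J k j = 0" if "j < k" for k j
      using that by (rule B_basis_below)
    show "B_basis n J k k \<noteq> 0" if "k \<in> {1..n}" for k
      using that typeB_poly_neq_0[of k "{1..<k} - J" "Var k"] by (simp add: B_basis_diag)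
    show "B_basis n J k k dvd \<theta> k"
      if "\<theta> \<in> Der n (B_arr n J)" "k \<in> {1..n}" "\<And>j. j < k \<Longrightarrow> \<theta> j = 0" for \<theta> k
      using that by (rule B_basis_diag_dvd)
  qed
  then show ?thesis
    by (rule triangular_basis.free)
qed

end
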